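(* Let $a>0$ and let $k$ be a non-negative integer. Let $\psi(t)=\sum_{n\ge1}e^{-\pi n^2 t/a}$, $\phi(t)=\sum_{n\ge1}e^{-\pi n^2 a t}$, and \[\epsilon_{2k+1}(a)=\frac{1}{4\pi a}\int_1^\infty \{a^{1/2}\phi(t)-\psi(t)\}\,\frac{(t-1)^{2k+1}}{(1+t)^{2k+5/2}}\,dt.\] Let $\Psi(\tau)=\sum_{n\ge1}e^{-\pi n^2\tau}$ for $\tau>0$ and $E_{2k+1}(a)=a^{1/4}\Psi(a)\,U(2k+2,\tfrac12,2\pi a)$. Then \[|\epsilon_{2k+1}(a)|<\mathcal{B}_{2k+1}(a):=\frac{a^{-3/4}(2k+1)!}{4\sqrt{2}\,\pi}\{E_{2k+1}(a)+E_{2k+1}(1/a)\}.\]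
   Context: $U(\alpha,b,z)$ denotes the confluent hypergeometric function of the second kind (Tricomi's function), which for $\alpha>0$, $\Re z>0$ has the representation $U(\alpha,b,z)=\frac{1}{\Gamma(\alpha)}\int_0^\infty e^{-zt}t^{\alpha-1}(1+t)^{b-\alpha-1}dt$. *)

theory Defs
  imports "HOL-Analysis.Analysis"
begin

definition theta_Psi :: "real \<Rightarrow> real" where
  "theta_Psi \<tau> = (\<Sum>n. exp (- pi * (real (Suc n))^2 * \<tau>))"

text \<open>Tricomi's confluent hypergeometric function U(alpha,b,z), via its integral
  representation (valid for alpha > 0, z > 0, the only case used).\<close>
definition tricomiU :: "real \<Rightarrow> real \<Rightarrow> real \<Rightarrow> real" where
  "tricomiU \<alpha> b z = (1 / Gamma \<alpha>) *
     (LBINT t:{0<..}. exp (- z * t) * t powr (\<alpha> - 1) * (1 + t) powr (b - \<alpha> - 1))"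

definition eps_odd :: "nat \<Rightarrow> real \<Rightarrow> real" where
  "eps_odd k a = 1 / (4 * pi * a) *
     (LBINT t:{1..}. (sqrt a * theta_Psi (a * t) - theta_Psi (t / a)) *
        ((t - 1) ^ (2*k+1) / (1 + t) powr (real (2*k) + 5/2)))"

definition E_odd :: "nat \<Rightarrow> real \<Rightarrow> real" where
  "E_odd k a = a powr (1/4) * theta_Psi a * tricomiU (real (2*k+2)) (1/2) (2 * pi * a)"

definition B_odd :: "nat \<Rightarrow> real \<Rightarrow> real" where
  "B_odd k a = a powr (-3/4) * fact (2*k+1) / (4 * sqrt 2 * pi) * (E_odd k a + E_odd k (1/a))"

end

theory Submission
  imports Defs "HOL-Probability.Sinc_Integral"
begin

(* Since Psi > 0, |sqrt a Psi(a t) - Psi(t/a)| < sqrt a Psi(a t) + Psi(t/a), and termwise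
   Psi(c t) <= Psi(c) exp(-pi c (t - 1)) for t >= 1. Integrating this majorant against the weight
   (t - 1)^(2k+1) / (1 + t)^(2k+5/2) and substituting t = 1 + 2 s turns each of its two pieces into
   Tricomi's integral, (2k+1)! U(2k+2, 1/2, 2 pi c) / sqrt 2 with c = a resp. 1/a, which yields
   4 pi a B(a). Strictness holds because the two integrands differ on an interval. *)

lemma theta_Psi_summable:
  assumes "\<tau> > 0"
  shows "summable (\<lambda>n. exp (- pi * (real (Suc n))^2 * \<tau>))"
proof (rule summable_comparison_test')
  show "summable (\<lambda>n. exp (- pi * \<tau>) ^ Suc n)"
    using assms by (simp add: summable_geometric)
  fix n :: nat
  have "- pi * (real (Suc n))^2 * \<tau> \<le> real (Suc n) * (- pi * \<tau>)"
    using assms by (simp add: power2_eq_square mult_right_mono)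
  then show "norm (exp (- pi * (real (Suc n))^2 * \<tau>)) \<le> exp (- pi * \<tau>) ^ Suc n"
    unfolding exp_of_nat_mult[symmetric] by simp
qed

lemma theta_Psi_pos: "\<tau> > 0 \<Longrightarrow> theta_Psi \<tau> > 0"
  unfolding theta_Psi_def by (rule suminf_pos[OF theta_Psi_summable]) auto

lemma theta_Psi_mult_le:
  assumes "c > 0" and "t \<ge> 1"
  shows "theta_Psi (c * t) \<le> theta_Psi c * exp (- pi * c * (t - 1))"
proof -
  have "exp (- pi * (real (Suc n))^2 * (c * t))
      \<le> exp (- pi * (real (Suc n))^2 * c) * exp (- pi * c * (t - 1))" for n
  proof -
    have "pi * c * (t - 1) * 1 \<le> pi * c * (t - 1) * (real (Suc n))^2"
      using assms by (intro mult_left_mono) auto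
    then show ?thesis
      by (simp add: algebra_simps flip: exp_add)
  qed
  then have "theta_Psi (c * t) \<le> (\<Sum>n. exp (- pi * (real (Suc n))^2 * c) * exp (- pi * c * (t - 1)))"
    unfolding theta_Psi_def using assms
    by (intro suminf_le summable_mult2 theta_Psi_summable) auto
  also have "\<dots> = theta_Psi c * exp (- pi * c * (t - 1))"
    unfolding theta_Psi_def by (rule suminf_mult2[OF theta_Psi_summable, symmetric]) fact
  finally show ?thesis .
qed

definition theta_majorant :: "real \<Rightarrow> real \<Rightarrow> real" where
  "theta_majorant a t = sqrt a * theta_Psi a * exp (- pi * a * (t - 1))
     + theta_Psi (1 / a) * exp (- pi * (1 / a) * (t - 1))"

lemma theta_Psi_difference_less:
  assumes "a > 0" and "t \<ge> 1"
  shows "\<bar>sqrt a * theta_Psi (a * t) - theta_Psi (t / a)\<bar> < theta_majorant a t"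
proof -
  have "\<bar>sqrt a * theta_Psi (a * t) - theta_Psi (t / a)\<bar> < sqrt a * theta_Psi (a * t) + theta_Psi (t / a)"
    using assms theta_Psi_pos[of "a * t"] theta_Psi_pos[of "t / a"] by (simp add: abs_if)
  also have "\<dots> \<le> sqrt a * (theta_Psi a * exp (- pi * a * (t - 1))) + theta_Psi (1 / a) * exp (- pi * (1 / a) * (t - 1))"
    using assms theta_Psi_mult_le[of a t] theta_Psi_mult_le[of "1 / a" t]
    by (intro add_mono mult_left_mono) auto
  finally show ?thesis by (simp add: theta_majorant_def mult.assoc)
qed

lemma integral_less_lborel:
  fixes f g :: "real \<Rightarrow> real"
  assumes f: "integrable lborel f" and g: "integrable lborel g"
    and le: "\<And>x. f x \<le> g x" and less: "\<And>x. x \<in> {a<..b} \<Longrightarrow> f x < g x" and "a < b"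
  shows "integral\<^sup>L lborel f < integral\<^sup>L lborel g"
proof -
  have "integral\<^sup>L lborel f \<noteq> integral\<^sup>L lborel g"
  proof
    assume "integral\<^sup>L lborel f = integral\<^sup>L lborel g"
    then have "integral\<^sup>L lborel (\<lambda>x. g x - f x) = 0"
      using f g by simp
    then have "AE x in lborel. g x - f x = 0"
      using f g le by (subst (asm) integral_nonneg_eq_0_iff_AE) auto
    then have "AE x in lborel. x \<notin> {a<..b}"
      by eventually_elim (use less in force)
    then have "{a<..b} \<in> null_sets lborel"
      by (subst AE_iff_null_sets) auto
    then show False
      using \<open>a < b\<close> by (simp add: null_sets_def)
  qed
  moreover have "integral\<^sup>L lborel f \<le> integral\<^sup>L lborel g"
    using f g le by (rule integral_mono)
  ultimately show ?thesis by simp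
qed

lemma abs_set_integral_less:
  fixes f g :: "real \<Rightarrow> real"
  assumes g: "set_integrable lborel A g"
    and le: "\<And>x. x \<in> A \<Longrightarrow> \<bar>f x\<bar> \<le> g x"
    and less: "\<And>x. x \<in> {a<..b} \<Longrightarrow> \<bar>f x\<bar> < g x" and "{a<..b} \<subseteq> A" and "a < b"
  shows "\<bar>LBINT x:A. f x\<bar> < (LBINT x:A. g x)"
proof (cases "set_integrable lborel A f")
  case True
  have "\<bar>LBINT x:A. f x\<bar> \<le> (LBINT x:A. \<bar>f x\<bar>)"
    using set_integral_norm_bound[OF True] by simp
  also have "\<dots> < (LBINT x:A. g x)"
    unfolding set_lebesgue_integral_def
    using set_integrable_abs[OF True] g le less \<open>{a<..b} \<subseteq> A\<close> \<open>a < b\<close>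
    by (intro integral_less_lborel[where a = a and b = b])
       (auto simp: set_integrable_def indicator_def)
  finally show ?thesis .
next
  case False
  \<comment> \<open>then the integral of f is 0 by convention, and it suffices that g has positive integral\<close>
  have "integral\<^sup>L lborel (\<lambda>x::real. 0) < (LBINT x:A. g x)"
    unfolding set_lebesgue_integral_def
    using g le less \<open>{a<..b} \<subseteq> A\<close> \<open>a < b\<close>
    by (intro integral_less_lborel[where a = a and b = b])
       (force simp: set_integrable_def indicator_def)+
  then show ?thesis
    using False by (simp add: set_lebesgue_integral_def set_integrable_def not_integrable_integral_eq)
qed

definition tricomi_kernel :: "real \<Rightarrow> real \<Rightarrow> real \<Rightarrow> real \<Rightarrow> real" where
  "tricomi_kernel \<alpha> b z t = exp (- z * t) * t powr (\<alpha> - 1) * (1 + t) powr (b - \<alpha> - 1)"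

lemma tricomiU_eq_kernel_integral:
  "tricomiU \<alpha> b z = (LBINT t:{0<..}. tricomi_kernel \<alpha> b z t) / Gamma \<alpha>"
  unfolding tricomiU_def tricomi_kernel_def by simp

lemma tricomi_kernel_le_exp:
  assumes "\<alpha> \<ge> 1" and "b \<le> 2" and "t > 0"
  shows "tricomi_kernel \<alpha> b z t \<le> exp (- z * t)"
proof -
  have "t powr (\<alpha> - 1) * (1 + t) powr (b - \<alpha> - 1) \<le> (1 + t) powr (\<alpha> - 1) * (1 + t) powr (b - \<alpha> - 1)"
    using assms by (intro mult_right_mono powr_mono2) auto
  also have "\<dots> = (1 + t) powr (b - 2)"
    by (simp flip: powr_add)
  also have "\<dots> \<le> 1"
    using assms powr_mono[of "b - 2" 0 "1 + t"] by simp
  finally show ?thesis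
    unfolding tricomi_kernel_def using mult_left_mono[of _ 1 "exp (- z * t)"]
    by (simp add: mult.assoc)
qed

lemma set_integrable_tricomi_kernel:
  assumes "\<alpha> \<ge> 1" and "b \<le> 2" and "z > 0"
  shows "set_integrable lborel {0<..} (tricomi_kernel \<alpha> b z)"
proof -
  have "set_integrable lborel {0<..} (\<lambda>t. exp (- (t * z)))"
    using \<open>z > 0\<close> by (rule integrable_I0i_exp_mscale)
  then show ?thesis
    using assms tricomi_kernel_le_exp[OF assms(1,2)]
    by (intro set_integrable_bound[OF \<open>set_integrable _ _ _\<close>] AE_I2)
       (auto simp: tricomi_kernel_def set_borel_measurable_def mult.commute)
qed

lemma tricomiU_shifted_integral:
  assumes "\<alpha> \<ge> 1" and "b \<le> 2" and "z > 0"
  shows "set_integrable lborel {1..}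
           (\<lambda>t. exp (- z * (t - 1) / 2) * (t - 1) powr (\<alpha> - 1) * (1 + t) powr (b - \<alpha> - 1))"
    and "(LBINT t:{1..}. exp (- z * (t - 1) / 2) * (t - 1) powr (\<alpha> - 1) * (1 + t) powr (b - \<alpha> - 1))
           = 2 powr (b - 1) * Gamma \<alpha> * tricomiU \<alpha> b z"
proof -
  define f where "f t = indicator {1..} t *\<^sub>R
    (exp (- z * (t - 1) / 2) * (t - 1) powr (\<alpha> - 1) * (1 + t) powr (b - \<alpha> - 1))" for t :: real
  have "Gamma \<alpha> > 0"
    using \<open>\<alpha> \<ge> 1\<close> by simp
  have f_affine: "f (1 + 2 * s) = 2 powr (b - 2) * (indicator {0<..} s *\<^sub>R tricomi_kernel \<alpha> b z s)" for s
  proof (cases "s > 0")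
    case True
    have "(2 * s) powr (\<alpha> - 1) * (2 * (1 + s)) powr (b - \<alpha> - 1)
        = 2 powr (\<alpha> - 1) * 2 powr (b - \<alpha> - 1) * (s powr (\<alpha> - 1) * (1 + s) powr (b - \<alpha> - 1))"
      using True by (subst (1 2) powr_mult) auto
    also have "2 powr (\<alpha> - 1) * 2 powr (b - \<alpha> - 1) = (2 :: real) powr (b - 2)"
      by (simp flip: powr_add)
    finally show ?thesis
      using True by (simp add: f_def tricomi_kernel_def algebra_simps)
  qed (auto simp: f_def indicator_def)
  have "integrable lborel (\<lambda>s. f (1 + 2 * s))"
    unfolding f_affine using set_integrable_tricomi_kernel[OF assms]
    by (simp add: set_integrable_def)
  then have f_integrable: "integrable lborel f"
    using lborel_integrable_real_affine_iff[of 2 f 1] by simp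
  show "set_integrable lborel {1..}
      (\<lambda>t. exp (- z * (t - 1) / 2) * (t - 1) powr (\<alpha> - 1) * (1 + t) powr (b - \<alpha> - 1))"
    using f_integrable unfolding set_integrable_def f_def[abs_def] .
  have "integral\<^sup>L lborel f = \<bar>2\<bar> *\<^sub>R integral\<^sup>L lborel (\<lambda>s. f (1 + 2 * s))"
    by (rule lborel_integral_real_affine) simp
  also have "\<dots> = 2 * 2 powr (b - 2) * (LBINT s:{0<..}. tricomi_kernel \<alpha> b z s)"
    by (simp add: f_affine set_lebesgue_integral_def)
  also have "\<dots> = 2 powr (b - 1) * Gamma \<alpha> * tricomiU \<alpha> b z"
    using \<open>Gamma \<alpha> > 0\<close> by (simp add: tricomiU_eq_kernel_integral powr_diff)
  finally show "(LBINT t:{1..}. exp (- z * (t - 1) / 2) * (t - 1) powr (\<alpha> - 1) * (1 + t) powr (b - \<alpha> - 1))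
      = 2 powr (b - 1) * Gamma \<alpha> * tricomiU \<alpha> b z"
    unfolding set_lebesgue_integral_def f_def[abs_def] .
qed

definition odd_weight :: "nat \<Rightarrow> real \<Rightarrow> real" where
  "odd_weight k t = (t - 1) ^ (2*k+1) / (1 + t) powr (real (2*k) + 5/2)"

lemma odd_weight_nonneg: "t \<ge> 1 \<Longrightarrow> odd_weight k t \<ge> 0"
  unfolding odd_weight_def by simp

lemma odd_weight_pos: "t > 1 \<Longrightarrow> odd_weight k t > 0"
  unfolding odd_weight_def by simp

lemma exp_odd_weight_eq_shifted_tricomi_integrand:
  assumes "t \<ge> 1"
  shows "exp (- pi * c * (t - 1)) * odd_weight k t
    = exp (- (2 * pi * c) * (t - 1) / 2) * (t - 1) powr (real (2*k+2) - 1) * (1 + t) powr (1/2 - real (2*k+2) - 1)"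
proof (cases "t = 1")
  case False
  with assms have "(t - 1) powr (real (2*k+2) - 1) = (t - 1) ^ (2*k+1)"
    by (subst powr_realpow[symmetric]) auto
  moreover have "(1 + t) powr (1/2 - real (2*k+2) - 1) = 1 / (1 + t) powr (real (2*k) + 5/2)"
    using powr_minus_divide[of "1 + t" "real (2*k) + 5/2"] by (simp add: algebra_simps)
  ultimately show ?thesis
    by (simp add: odd_weight_def)
qed (simp add: odd_weight_def) \<comment> \<open>at t = 1 both sides vanish, as 0 powr _ = 0\<close>

lemma set_integral_exp_odd_weight:
  assumes "c > 0"
  shows "set_integrable lborel {1..} (\<lambda>t. exp (- pi * c * (t - 1)) * odd_weight k t)"
    and "(LBINT t:{1..}. exp (- pi * c * (t - 1)) * odd_weight k t)
           = fact (2*k+1) * tricomiU (real (2*k+2)) (1/2) (2 * pi * c) / sqrt 2"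
proof -
  note shifted = tricomiU_shifted_integral[of "real (2*k+2)" "1/2" "2 * pi * c"]
  show "set_integrable lborel {1..} (\<lambda>t. exp (- pi * c * (t - 1)) * odd_weight k t)"
    using shifted(1) assms
    by (subst set_integrable_cong[OF refl refl exp_odd_weight_eq_shifted_tricomi_integrand]) auto
  have "Gamma (real (2*k+2)) = fact (2*k+1)"
    using Gamma_fact[of "2*k+1", where 'a = real] by (simp add: add.commute)
  moreover have "(2::real) powr (1/2 - 1) = 1 / sqrt 2"
    by (simp add: powr_minus_divide powr_half_sqrt)
  ultimately show "(LBINT t:{1..}. exp (- pi * c * (t - 1)) * odd_weight k t)
      = fact (2*k+1) * tricomiU (real (2*k+2)) (1/2) (2 * pi * c) / sqrt 2"
    using shifted(2) assms
    by (subst set_lebesgue_integral_cong[OF _ allI[OF impI[OF exp_odd_weight_eq_shifted_tricomi_integrand]]]) auto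
qed

lemma B_odd_eq:
  assumes "a > 0"
  shows "B_odd k a = 1 / (4 * pi * a) *
    (sqrt a * theta_Psi a * (fact (2*k+1) * tricomiU (real (2*k+2)) (1/2) (2 * pi * a) / sqrt 2)
     + theta_Psi (1 / a) * (fact (2*k+1) * tricomiU (real (2*k+2)) (1/2) (2 * pi * (1 / a)) / sqrt 2))"
proof -
  define r where "r = a powr (1/4)"
  have "r > 0"
    using assms by (simp add: r_def)
  have sqrt_a: "sqrt a = r ^ 2"
    using assms by (simp add: r_def powr_power flip: powr_half_sqrt)
  have a_powr: "a powr (-3/4) = 1 / r ^ 3"
    using assms by (simp add: r_def powr_power powr_minus_divide)
  have inverse_powr: "(1 / a) powr (1/4) = 1 / r"
    using assms by (simp add: r_def powr_divide)
  have a_eq: "1 / (4 * pi * a) = 1 / (4 * pi * r ^ 4)"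
    using assms by (simp add: r_def powr_power)
  define F where "F = (fact (2*k+1) :: real)"
  define P Q where "P = theta_Psi a" and "Q = theta_Psi (1 / a)"
  define U V where "U = tricomiU (real (2*k+2)) (1/2) (2 * pi * a)"
    and "V = tricomiU (real (2*k+2)) (1/2) (2 * pi * (1 / a))"
  show ?thesis
    unfolding B_odd_def E_odd_def F_def[symmetric] P_def[symmetric] Q_def[symmetric]
      U_def[symmetric] V_def[symmetric] sqrt_a a_powr inverse_powr a_eq r_def[symmetric]
    using \<open>r > 0\<close> by (simp add: field_simps eval_nat_numeral)
qed

lemma set_integral_theta_majorant_odd_weight:
  assumes "a > 0"
  shows "set_integrable lborel {1..} (\<lambda>t. theta_majorant a t * odd_weight k t)"
    and "(LBINT t:{1..}. theta_majorant a t * odd_weight k t) = 4 * pi * a * B_odd k a"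
proof -
  have split: "theta_majorant a t * odd_weight k t
      = sqrt a * theta_Psi a * (exp (- pi * a * (t - 1)) * odd_weight k t)
        + theta_Psi (1 / a) * (exp (- pi * (1 / a) * (t - 1)) * odd_weight k t)" for t
    by (simp add: theta_majorant_def algebra_simps)
  note at_a = set_integral_exp_odd_weight[of a k]
    and at_inverse = set_integral_exp_odd_weight[of "1 / a" k]
  show "set_integrable lborel {1..} (\<lambda>t. theta_majorant a t * odd_weight k t)"
    unfolding split using assms at_a(1) at_inverse(1) by simp
  show "(LBINT t:{1..}. theta_majorant a t * odd_weight k t) = 4 * pi * a * B_odd k a"
    unfolding split B_odd_eq[OF assms] using assms at_a at_inverse
    by (simp add: set_integral_add set_integral_mult_right)
qed

theorem theorem4:
  fixes a :: real and k :: nat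
  assumes "a > 0"
  shows "\<bar>eps_odd k a\<bar> < B_odd k a"
proof -
  define D where "D t = sqrt a * theta_Psi (a * t) - theta_Psi (t / a)" for t
  note majorant = set_integral_theta_majorant_odd_weight[OF assms, of k]
  have "\<bar>LBINT t:{1..}. D t * odd_weight k t\<bar> < (LBINT t:{1..}. theta_majorant a t * odd_weight k t)"
  proof (rule abs_set_integral_less[OF majorant(1), where a = 1 and b = 2])
    fix t :: real
    assume "t \<in> {1..}"
    then show "\<bar>D t * odd_weight k t\<bar> \<le> theta_majorant a t * odd_weight k t"
      using theta_Psi_difference_less[OF assms, of t] odd_weight_nonneg[of t k]
      by (simp add: D_def abs_mult mult_right_mono)
  next
    fix t :: real
    assume "t \<in> {1<..2}"
    then show "\<bar>D t * odd_weight k t\<bar> < theta_majorant a t * odd_weight k t"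
      using theta_Psi_difference_less[OF assms, of t] odd_weight_pos[of t k]
      by (simp add: D_def abs_mult)
  qed auto
  then show ?thesis
    using assms unfolding eps_odd_def odd_weight_def[symmetric] D_def[symmetric] majorant(2)
    by (simp add: abs_mult field_simps)
qed

end
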